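(* Let $S$ be a nonempty subset of $\mathbb{R}^m$. Then $\operatorname{Face}_{\mathcal{A}_{\bm o}}\big(\operatorname{Sign}_{\mathcal{A}_{\bm o}}(S)\big)=S$ if and only if $S$ is an open face of $\delta\mathcal{A}_{\bm o}$.
   Context: Fix nonzero $\bm u_1,\dots,\bm u_m\in\mathbb{R}^n$ (repetitions and parallel vectors allowed). For $\bm a\in\mathbb{R}^m$, $\mathcal{A}_{\bm a}$ is the arrangement of hyperplanes $\langle\bm u_i,\bm x\rangle=a_i$, $i=1,\dots,m$; the sign vector of $\bm x$ is $(\operatorname{sign}(\langle\bm u_i,\bm x\rangle-a_i))_{i=1}^m$, and $\operatorname{sign}(\mathcal{A}_{\bm a})\subseteq\{+,0,-\}^m$ is the set of all such sign vectors. Sign operator: for $S\subseteq\mathbb{R}^m$, $\operatorname{Sign}_{\mathcal{A}_{\bm o}}(S)=\bigcup_{\bm a\in S}\operatorname{sign}(\mathcal{A}_{\bm a})$. Face operator: for $\bm s\in\{+,0,-\}^m$, $\operatorname{Face}_{\mathcal{A}_{\bm o}}(\bm s)=\{\bm a\in\mathbb{R}^m:\bm s\in\operatorname{sign}(\mathcal{A}_{\bm a})\}$, and for $T\subseteq\{+,0,-\}^m$, $\operatorname{Face}_{\mathcal{A}_{\bm o}}(T)=\bigcap_{\bm s\in T}\operatorname{Face}_{\mathcal{A}_{\bm o}}(\bm s)$. A circuit is $C\subseteq[m]$ with $\{\bm u_i:i\in C\}$ a minimal linearly dependent indexed family; $\bm c^C$ satisfies $\sum c_i\bm u_i=\bm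 0$, $c_i\ne0\iff i\in C$. The derived arrangement $\delta\mathcal{A}_{\bm o}$ consists of hyperplanes $\langle\bm c^C,\bm y\rangle=0$ in $\mathbb{R}^m$; its open faces are the nonempty sets $\{\bm y:\operatorname{sign}\langle\bm c^C,\bm y\rangle=\epsilon_C\text{ for all circuits }C\}$ for fixed $\epsilon_C\in\{+,0,-\}$. *)

theory Defs
  imports "HOL-Analysis.Analysis"
begin

text \<open>Hyperplanes are indexed by a finite type 'm (so m = CARD('m)); the normal vectors are
  u :: 'm => real^'n.  Signs +,0,- are encoded as the reals 1,0,-1 (via sgn).\<close>

definition sign_vec :: "('m \<Rightarrow> real^'n) \<Rightarrow> real^'m \<Rightarrow> real^'n \<Rightarrow> ('m \<Rightarrow> real)" where
  "sign_vec u a x = (\<lambda>i. sgn (inner (u i) x - a $ i))"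

definition sign_arr :: "('m \<Rightarrow> real^'n) \<Rightarrow> real^'m \<Rightarrow> ('m \<Rightarrow> real) set" where
  "sign_arr u a = range (sign_vec u a)"

definition Sign_op :: "('m \<Rightarrow> real^'n) \<Rightarrow> (real^'m) set \<Rightarrow> ('m \<Rightarrow> real) set" where
  "Sign_op u S = (\<Union>a\<in>S. sign_arr u a)"

definition Face_vec :: "('m \<Rightarrow> real^'n) \<Rightarrow> ('m \<Rightarrow> real) \<Rightarrow> (real^'m) set" where
  "Face_vec u s = {a. s \<in> sign_arr u a}"

definition Face_op :: "('m \<Rightarrow> real^'n) \<Rightarrow> ('m \<Rightarrow> real) set \<Rightarrow> (real^'m) set" where
  "Face_op u T = (\<Inter>s\<in>T. Face_vec u s)"

text \<open>Linear dependence of the indexed family (u i)_{i in C} (repetitions count).\<close>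
definition dep_family :: "('m \<Rightarrow> real^'n) \<Rightarrow> 'm set \<Rightarrow> bool" where
  "dep_family u C = (\<exists>c. (\<Sum>i\<in>C. c i *\<^sub>R u i) = 0 \<and> (\<exists>i\<in>C. c i \<noteq> 0))"

definition circuit :: "('m \<Rightarrow> real^'n) \<Rightarrow> 'm set \<Rightarrow> bool" where
  "circuit u C = (dep_family u C \<and> (\<forall>D. D \<subset> C \<longrightarrow> \<not> dep_family u D))"

definition circuit_vec :: "('m::finite \<Rightarrow> real^'n) \<Rightarrow> 'm set \<Rightarrow> real^'m" where
  "circuit_vec u C = (SOME c. (\<Sum>i\<in>UNIV. c $ i *\<^sub>R u i) = 0 \<and> (\<forall>i. c $ i \<noteq> 0 \<longleftrightarrow> i \<in> C))"

definition derived_open_face :: "('m::finite \<Rightarrow> real^'n) \<Rightarrow> (real^'m) set \<Rightarrow> bool" where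
  "derived_open_face u F = (F \<noteq> {} \<and>
     (\<exists>\<epsilon> :: 'm set \<Rightarrow> real. (\<forall>C. \<epsilon> C \<in> {-1, 0, 1}) \<and>
        F = {y. \<forall>C. circuit u C \<longrightarrow> sgn (inner (circuit_vec u C) y) = \<epsilon> C}))"

end

theory Submission imports Defs begin

text \<open>
  Everything rests on the criterion that sign(A_a) is contained in sign(A_b) exactly when every
  circuit vector c^C has the same sign on a and on b. Granting it, Face(Sign S) is the set of
  points whose circuit signs agree with those of every point of S, and this set is S precisely
  when S is one class of the relation "same circuit signs", i.e. an open face of the derived
  arrangement.

  For the criterion: s is a sign vector of A_b iff U x - b has sign s for some x. The range of U
  is the annihilator of the linear dependencies r of the normals, so by a separation argument
  this happens iff for every dependency r the number -r.b is a value of r.t on the orthant of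
  sign s. Which numbers are such values depends only on the sign of the number, and
  attainability is additive along sign-compatible sums of dependencies; since every dependency
  is a sign-compatible sum of multiples of circuit vectors, circuits suffice.
\<close>

lemma sgn_in_signs: "sgn (x::real) \<in> {-1,0,1}"
  by (auto simp: sgn_real_def)

lemma sgn_add_sgn_eq: "sgn (a::real) = sgn b \<Longrightarrow> sgn (a + b) = sgn a"
  by (auto simp: sgn_real_def split: if_splits)

lemma sum_nonzero_if_same_sign:
  "0 \<le> (a::real) * b \<Longrightarrow> a + b \<noteq> 0 \<longleftrightarrow> a \<noteq> 0 \<or> b \<noteq> 0"
  by (auto simp: zero_le_mult_iff)

lemma sum_mult_pos_if_same_sign:
  "0 \<le> (a::real) * b \<Longrightarrow> 0 < (a + b) * c \<longleftrightarrow> 0 < a * c \<or> 0 < b * c"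
  by (smt (verit, ccfv_threshold) distrib_right mult_nonneg_nonneg mult_nonpos_nonpos zero_le_mult_iff)

lemma nonneg_mult_if_same_sign: "0 \<le> a * b \<Longrightarrow> 0 < c * b \<Longrightarrow> 0 \<le> a * (c::real)"
  by (auto simp: zero_le_mult_iff zero_less_mult_iff)

lemma sgn_sum_eq:
  fixes f :: "'a \<Rightarrow> real"
  assumes "finite A" "A \<noteq> {}" "\<And>i. i \<in> A \<Longrightarrow> sgn (f i) = sgn v"
  shows "sgn (sum f A) = sgn v"
proof -
  consider "0 < v" | "v < 0" | "v = 0" by linarith
  then show ?thesis
  proof cases
    case 1
    then have "0 < sum f A" using assms by (intro sum_pos) (auto simp: sgn_1_pos[symmetric])
    then show ?thesis using 1 by simp
  next
    case 2
    then have "0 < sum (\<lambda>i. - f i) A" using assms by (intro sum_pos) (auto simp: sgn_1_neg[symmetric])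
    then show ?thesis using 2 by (simp add: sum_negf)
  next
    case 3
    then show ?thesis using assms by (simp add: sgn_0_0)
  qed
qed

definition sign_orthant :: "'m set \<Rightarrow> ('m \<Rightarrow> real) \<Rightarrow> (real^'m) set" where
  "sign_orthant I s = {t. \<forall>i\<in>I. sgn (t$i) = s i}"

definition attains :: "'m set \<Rightarrow> real^'m \<Rightarrow> ('m \<Rightarrow> real) \<Rightarrow> real \<Rightarrow> bool" where
  "attains I r s v \<longleftrightarrow> (\<exists>t\<in>sign_orthant I s. inner r t = v)"

text \<open>Some coordinate direction along which one can move inside the orthant increases r.\<close>
definition has_ascent :: "'m set \<Rightarrow> real^'m \<Rightarrow> ('m \<Rightarrow> real) \<Rightarrow> bool" where
  "has_ascent I r s \<longleftrightarrow> (\<exists>i. r$i \<noteq> 0 \<and> (i \<notin> I \<or> 0 < r$i * s i))"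

lemma sign_orthant_add:
  "t1 \<in> sign_orthant I s \<Longrightarrow> t2 \<in> sign_orthant I s \<Longrightarrow> t1 + t2 \<in> sign_orthant I s"
  unfolding sign_orthant_def by (auto simp: sgn_add_sgn_eq)

lemma sign_orthant_scaleR:
  "t \<in> sign_orthant I s \<Longrightarrow> 0 < c \<Longrightarrow> c *\<^sub>R t \<in> sign_orthant I s"
  unfolding sign_orthant_def by (auto simp: sgn_mult)

lemma convex_sign_orthant: "convex (sign_orthant I s)"
proof (rule convexI)
  fix t1 t2 and c1 c2 :: real
  assume t: "t1 \<in> sign_orthant I s" "t2 \<in> sign_orthant I s" and c: "0 \<le> c1" "0 \<le> c2" "c1 + c2 = 1"
  consider "c1 = 0" | "c2 = 0" | "0 < c1" "0 < c2" using c by linarith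
  then show "c1 *\<^sub>R t1 + c2 *\<^sub>R t2 \<in> sign_orthant I s"
    by cases (use t c in \<open>auto intro: sign_orthant_add sign_orthant_scaleR\<close>)
qed

lemma sign_pattern_in_sign_orthant:
  assumes "\<forall>i\<in>I. s i \<in> {-1,0,1}"
  shows "(\<chi> i. if i \<in> I then s i else 0) \<in> sign_orthant I s"
  using assms unfolding sign_orthant_def by auto

lemma attains_scaleR: "attains I r s v \<Longrightarrow> attains I (c *\<^sub>R r) s (c * v)"
  unfolding attains_def by auto

lemma attains_sgn_cong:
  assumes "attains I r s v" "sgn v = sgn w"
  shows "attains I r s w"
proof (cases "v = 0")
  case True
  then show ?thesis using assms by (simp add: sgn_0_0)
next
  case False
  obtain t where t: "t \<in> sign_orthant I s" "inner r t = v"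
    using assms(1) unfolding attains_def by auto
  have "0 < w / v"
    using assms(2) False by (auto simp: sgn_real_def divide_pos_pos divide_neg_neg split: if_splits)
  then have "(w / v) *\<^sub>R t \<in> sign_orthant I s" using t(1) by (rule sign_orthant_scaleR[rotated])
  moreover have "inner r ((w / v) *\<^sub>R t) = w" using t(2) False by simp
  ultimately show ?thesis unfolding attains_def by blast
qed

lemma has_ascent_imp_positive_value:
  assumes s: "\<forall>i\<in>I. s i \<in> {-1,0,1}" and "has_ascent I r s"
  obtains t where "t \<in> sign_orthant I s" "0 < inner r t"
proof -
  obtain k where k: "r$k \<noteq> 0" "k \<notin> I \<or> 0 < r$k * s k"
    using assms(2) unfolding has_ascent_def by auto
  define \<sigma> where "\<sigma> = (if k \<in> I then s k else sgn (r$k))"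
  have r\<sigma>: "0 < r$k * \<sigma>" using k unfolding \<sigma>_def by (auto simp: sgn_real_def zero_less_mult_iff)
  have \<sigma>: "\<sigma> = 1 \<or> \<sigma> = -1" using s k r\<sigma> unfolding \<sigma>_def by (auto simp: sgn_real_def)
  define t0 where "t0 = (\<chi> i. if i \<in> I then s i else 0)"
  have t0: "t0 \<in> sign_orthant I s" unfolding t0_def using s by (rule sign_pattern_in_sign_orthant)
  define M where "M = (\<bar>inner r t0\<bar> + 1) / (r$k * \<sigma>)"
  have M: "0 < M" "M * (r$k * \<sigma>) = \<bar>inner r t0\<bar> + 1" using r\<sigma> unfolding M_def by auto
  define t where "t = t0 + (M * \<sigma>) *\<^sub>R axis k 1"
  \<comment> \<open>only coordinate k of t0 changes, keeping its sign \<sigma>, which on I is s k\<close>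
  have "t \<in> sign_orthant I s"
    using t0 \<sigma> M(1) unfolding t_def t0_def \<sigma>_def sign_orthant_def
    by (auto simp: axis_def sgn_real_def)
  moreover have "inner r t = inner r t0 + M * (r$k * \<sigma>)"
    unfolding t_def by (simp add: inner_add_right inner_axis algebra_simps)
  ultimately show ?thesis using that M(2) by force
qed

lemma positive_term_imp_has_ascent:
  assumes "t \<in> sign_orthant I s" "0 < r$i * t$i"
  shows "has_ascent I r s"
proof -
  have "0 < r$i * s i" if "i \<in> I"
    using assms that unfolding sign_orthant_def by (auto simp: sgn_real_def zero_less_mult_iff)
  then show ?thesis using assms(2) unfolding has_ascent_def by (metis mult_eq_0_iff less_irrefl)
qed

lemma positive_value_imp_has_ascent:
  assumes "t \<in> sign_orthant I s" "0 < inner r t"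
  shows "has_ascent I r s"
proof -
  have "\<exists>i. 0 < r$i * t$i"
  proof (rule ccontr)
    assume "\<not> ?thesis"
    then have "inner r t \<le> 0"
      unfolding inner_vec_def by (intro sum_nonpos) (auto simp: not_less)
    with assms(2) show False by simp
  qed
  then show ?thesis using positive_term_imp_has_ascent[OF assms(1)] by blast
qed

lemma has_ascent_iff_positive_value:
  assumes "\<forall>i\<in>I. s i \<in> {-1,0,1}"
  shows "has_ascent I r s \<longleftrightarrow> (\<exists>t\<in>sign_orthant I s. 0 < inner r t)"
  using has_ascent_imp_positive_value[OF assms] positive_value_imp_has_ascent by metis

lemma zero_value_ascent_imp_descent:
  assumes t: "t \<in> sign_orthant I s" "inner r t = 0" and "has_ascent I r s"
  shows "has_ascent I (-r) s"
proof -
  obtain k where k: "r$k \<noteq> 0" "k \<notin> I \<or> 0 < r$k * s k"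
    using assms(3) unfolding has_ascent_def by auto
  show ?thesis
  proof (cases "k \<in> I")
    case False
    then show ?thesis using k unfolding has_ascent_def by (intro exI[of _ k]) auto
  next
    case True
    then have "0 < r$k * t$k"
      using k t(1) unfolding sign_orthant_def by (auto simp: sgn_real_def zero_less_mult_iff split: if_splits)
    moreover have "r$k * t$k \<le> (\<Sum>l\<in>UNIV. r$l * t$l)" if "\<forall>l. 0 \<le> r$l * t$l"
      using that by (intro member_le_sum) auto
    ultimately obtain l where "(-r)$l * t$l > 0"
      using t(2) unfolding inner_vec_def by (force simp: not_less)
    then show ?thesis using positive_term_imp_has_ascent[OF t(1)] by blast
  qed
qed

text \<open>
  The values of r on the orthant form {0}, an open half line or all of R. Describing which one
  through has_ascent is what makes attainability additive along sign-compatible sums.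
\<close>
lemma attains_iff:
  assumes s: "\<forall>i\<in>I. s i \<in> {-1,0,1}"
  shows "attains I r s v \<longleftrightarrow>
    (v = 0 \<and> (has_ascent I r s \<longleftrightarrow> has_ascent I (-r) s)) \<or>
    (0 < v \<and> has_ascent I r s) \<or> (v < 0 \<and> has_ascent I (-r) s)"
    (is "_ \<longleftrightarrow> ?zero \<or> ?pos \<or> ?neg")
proof
  assume "attains I r s v"
  then obtain t where t: "t \<in> sign_orthant I s" "inner r t = v" unfolding attains_def by auto
  have "has_ascent I r s" if "0 < v"
    using positive_value_imp_has_ascent[OF t(1)] that t(2) by simp
  moreover have "has_ascent I (-r) s" if "v < 0"
    using positive_value_imp_has_ascent[OF t(1), of "-r"] that t(2) by simp
  moreover have "has_ascent I r s \<longleftrightarrow> has_ascent I (-r) s" if "v = 0"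
    using zero_value_ascent_imp_descent[OF t(1), of r] zero_value_ascent_imp_descent[OF t(1), of "-r"]
      that t(2) by auto
  ultimately show "?zero \<or> ?pos \<or> ?neg" by (metis linorder_neqE_linordered_idom)
next
  have pos: "\<exists>t\<in>sign_orthant I s. 0 < inner r t" if "has_ascent I r s"
    using has_ascent_iff_positive_value[OF s] that by blast
  have neg: "\<exists>t\<in>sign_orthant I s. inner r t < 0" if "has_ascent I (-r) s"
    using has_ascent_iff_positive_value[OF s, of "-r"] that by auto
  have same_sign: "\<exists>t\<in>sign_orthant I s. sgn (inner r t) = sgn v" if "?pos \<or> ?neg"
    using that pos neg by (metis sgn_pos sgn_neg)
  assume "?zero \<or> ?pos \<or> ?neg"
  then consider "v \<noteq> 0" "\<exists>t\<in>sign_orthant I s. sgn (inner r t) = sgn v"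
    | "v = 0" "has_ascent I r s" "has_ascent I (-r) s"
    | "v = 0" "\<not> has_ascent I r s" "\<not> has_ascent I (-r) s"
    using same_sign by fastforce
  then show "attains I r s v"
  proof cases
    case 1
    then show ?thesis using attains_sgn_cong unfolding attains_def by blast
  next
    case 2
    obtain tp where tp: "tp \<in> sign_orthant I s" "0 < inner r tp" using pos 2 by auto
    obtain tn where tn: "tn \<in> sign_orthant I s" "inner r tn < 0" using neg 2 by auto
    define t where "t = (- inner r tn) *\<^sub>R tp + (inner r tp) *\<^sub>R tn"
    have "t \<in> sign_orthant I s"
      unfolding t_def using tp tn by (intro sign_orthant_add sign_orthant_scaleR) auto
    moreover have "inner r t = 0" unfolding t_def by (simp add: inner_add_right inner_diff_right)
    ultimately show ?thesis unfolding attains_def using 2 by blast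
  next
    case 3
    define t0 where "t0 = (\<chi> i. if i \<in> I then s i else 0)"
    \<comment> \<open>without ascent or descent, r is supported in I and vanishes wherever s does\<close>
    have "r$i * t0$i = 0" for i
    proof (cases "r$i = 0")
      case False
      then have "i \<in> I" "\<not> 0 < r$i * s i" "\<not> r$i * s i < 0"
        using 3 unfolding has_ascent_def by auto
      then show ?thesis unfolding t0_def by auto
    qed simp
    then have "inner r t0 = 0" unfolding inner_vec_def by (intro sum.neutral) (simp del: mult_eq_0_iff)
    moreover have "t0 \<in> sign_orthant I s" unfolding t0_def using s by (rule sign_pattern_in_sign_orthant)
    ultimately show ?thesis unfolding attains_def using 3 by blast
  qed
qed

lemma has_ascent_add:
  assumes "\<forall>i. 0 \<le> r1$i * r2$i"
  shows "has_ascent I (r1 + r2) s \<longleftrightarrow> has_ascent I r1 s \<or> has_ascent I r2 s"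
proof -
  have "(r1 + r2)$i \<noteq> 0 \<and> (i \<notin> I \<or> 0 < (r1 + r2)$i * s i) \<longleftrightarrow>
      r1$i \<noteq> 0 \<and> (i \<notin> I \<or> 0 < r1$i * s i) \<or> r2$i \<noteq> 0 \<and> (i \<notin> I \<or> 0 < r2$i * s i)" for i
    using assms sum_nonzero_if_same_sign sum_mult_pos_if_same_sign by auto
  then show ?thesis unfolding has_ascent_def by blast
qed

lemma attains_add_conformal:
  assumes s: "\<forall>i\<in>I. s i \<in> {-1,0,1}" and conf: "\<forall>i. 0 \<le> r1$i * r2$i"
    and "attains I r1 s v1" "attains I r2 s v2"
  shows "attains I (r1 + r2) s (v1 + v2)"
proof -
  have "\<forall>i. 0 \<le> (-r1)$i * (-r2)$i" using conf by simp
  from has_ascent_add[OF this] have "has_ascent I (-(r1 + r2)) s \<longleftrightarrow>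
      has_ascent I (-r1) s \<or> has_ascent I (-r2) s" by (simp add: add.commute)
  with assms(3,4) show ?thesis unfolding attains_iff[OF s] has_ascent_add[OF conf]
    by (smt (verit))
qed

definition dependency :: "('m::finite \<Rightarrow> real^'n) \<Rightarrow> real^'m \<Rightarrow> bool" where
  "dependency u r \<longleftrightarrow> (\<Sum>i\<in>UNIV. r$i *\<^sub>R u i) = 0"

definition supp :: "real^'m \<Rightarrow> 'm set" where
  "supp r = {i. r$i \<noteq> 0}"

lemma dependency_scaleR:
  assumes "dependency u r"
  shows "dependency u (c *\<^sub>R r)"
proof -
  have "(\<Sum>i\<in>UNIV. (c *\<^sub>R r)$i *\<^sub>R u i) = c *\<^sub>R (\<Sum>i\<in>UNIV. r$i *\<^sub>R u i)"
    by (simp add: scaleR_sum_right)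
  then show ?thesis using assms unfolding dependency_def by simp
qed

lemma dependency_diff: "dependency u r1 \<Longrightarrow> dependency u r2 \<Longrightarrow> dependency u (r1 - r2)"
  unfolding dependency_def by (simp add: scaleR_left_diff_distrib sum_subtractf)

lemma supp_empty_iff [simp]: "supp r = {} \<longleftrightarrow> r = 0"
  unfolding supp_def by (auto simp: vec_eq_iff)

lemma dep_family_iff_dependency:
  fixes u :: "'m::finite \<Rightarrow> real^'n"
  shows "dep_family u D \<longleftrightarrow> (\<exists>r. dependency u r \<and> r \<noteq> 0 \<and> supp r \<subseteq> D)"
proof
  assume "dep_family u D"
  then obtain c where c: "(\<Sum>i\<in>D. c i *\<^sub>R u i) = 0" "\<exists>i\<in>D. c i \<noteq> 0"
    unfolding dep_family_def by auto
  define r :: "real^'m" where "r = (\<chi> i. if i \<in> D then c i else 0)"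
  have "(\<Sum>i\<in>UNIV. r$i *\<^sub>R u i) = (\<Sum>i\<in>D. c i *\<^sub>R u i)"
    unfolding r_def by (simp add: sum.If_cases if_distrib[of "\<lambda>x. x *\<^sub>R _"])
  then have "dependency u r" using c(1) unfolding dependency_def by simp
  moreover have "r \<noteq> 0" "supp r \<subseteq> D" using c(2) unfolding r_def supp_def by (auto simp: vec_eq_iff)
  ultimately show "\<exists>r. dependency u r \<and> r \<noteq> 0 \<and> supp r \<subseteq> D" by blast
next
  assume "\<exists>r. dependency u r \<and> r \<noteq> 0 \<and> supp r \<subseteq> D"
  then obtain r where r: "dependency u r" "r \<noteq> 0" "supp r \<subseteq> D" by auto
  have "(\<Sum>i\<in>D. r$i *\<^sub>R u i) = (\<Sum>i\<in>UNIV. r$i *\<^sub>R u i)"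
    using r(3) unfolding supp_def by (intro sum.mono_neutral_left) auto
  moreover have "\<exists>i\<in>D. r$i \<noteq> 0" using r(2,3) unfolding supp_def by (auto simp: vec_eq_iff)
  ultimately show "dep_family u D" using r(1) unfolding dep_family_def dependency_def by auto
qed

lemma circuit_iff_dependency:
  fixes u :: "'m::finite \<Rightarrow> real^'n"
  shows "circuit u C \<longleftrightarrow> (\<exists>r. dependency u r \<and> r \<noteq> 0 \<and> supp r \<subseteq> C) \<and>
    (\<forall>r. dependency u r \<and> r \<noteq> 0 \<longrightarrow> \<not> supp r \<subset> C)"
  unfolding circuit_def dep_family_iff_dependency by blast

lemma circuit_vec_dependency:
  fixes u :: "'m::finite \<Rightarrow> real^'n"
  assumes "circuit u C"
  shows "dependency u (circuit_vec u C)" "supp (circuit_vec u C) = C"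
proof -
  obtain r where "dependency u r" "r \<noteq> 0" "supp r \<subseteq> C"
    and "\<forall>r. dependency u r \<and> r \<noteq> 0 \<longrightarrow> \<not> supp r \<subset> C"
    using assms unfolding circuit_iff_dependency by blast
  then have "\<exists>c. (\<Sum>i\<in>UNIV. c $ i *\<^sub>R u i) = 0 \<and> (\<forall>i. c $ i \<noteq> 0 \<longleftrightarrow> i \<in> C)"
    unfolding dependency_def supp_def by blast
  from someI_ex[OF this] show "dependency u (circuit_vec u C)" "supp (circuit_vec u C) = C"
    unfolding circuit_vec_def dependency_def supp_def by auto
qed

lemma circuit_nonempty:
  fixes u :: "'m::finite \<Rightarrow> real^'n"
  shows "circuit u C \<Longrightarrow> C \<noteq> {}"
  unfolding circuit_iff_dependency by (metis subset_empty supp_empty_iff)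

lemma dependency_in_circuit_parallel:
  fixes u :: "'m::finite \<Rightarrow> real^'n"
  assumes C: "circuit u C" and y: "dependency u y" "supp y \<subseteq> C"
  obtains \<mu> where "y = \<mu> *\<^sub>R circuit_vec u C"
proof -
  define c where "c = circuit_vec u C"
  have c: "dependency u c" "supp c = C" using circuit_vec_dependency[OF C] c_def by auto
  obtain k where k: "k \<in> C" using circuit_nonempty[OF C] by auto
  then have ck: "c$k \<noteq> 0" using c(2) unfolding supp_def by auto
  define z where "z = y - (y$k / c$k) *\<^sub>R c"
  have "dependency u z" unfolding z_def by (intro dependency_diff dependency_scaleR y c)
  moreover have "supp z \<subseteq> C - {k}" using y(2) c(2) ck unfolding z_def supp_def by auto
  then have "supp z \<subset> C" using k by blast
  ultimately have "z = 0" using C unfolding circuit_iff_dependency by blast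
  then show ?thesis using that[of "y$k / c$k"] unfolding z_def c_def by simp
qed

text \<open>
  Subtracting from p the largest multiple of q that flips no sign of p kills at least one
  coordinate of p.
\<close>
lemma conformal_reduction:
  fixes p q :: "real^'m::finite"
  assumes "supp q \<subseteq> supp p" "\<exists>i. 0 < q$i * p$i"
  obtains \<theta> where "0 < \<theta>" "\<forall>i. 0 \<le> (p - \<theta> *\<^sub>R q)$i * p$i" "supp (p - \<theta> *\<^sub>R q) \<subset> supp p"
proof -
  define J where "J = {i. 0 < q$i * p$i}"
  define \<theta> where "\<theta> = Min ((\<lambda>i. p$i / q$i) ` J)"
  have J: "finite J" "J \<noteq> {}" using assms(2) unfolding J_def by auto
  then have "\<theta> \<in> (\<lambda>i. p$i / q$i) ` J" unfolding \<theta>_def by (intro Min_in) auto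
  then obtain k where k: "k \<in> J" "\<theta> = p$k / q$k" by auto
  have \<theta>_le: "\<theta> \<le> p$i / q$i" if "i \<in> J" for i
    unfolding \<theta>_def using J that by (intro Min_le) auto
  have kJ: "0 < q$k * p$k" using k(1) unfolding J_def by auto
  have \<theta>: "0 < \<theta>" using k(2) kJ by (auto simp: zero_less_divide_iff zero_less_mult_iff)
  have "\<theta> * (q$i * p$i) \<le> p$i * p$i" for i
  proof (cases "i \<in> J")
    case True
    then have "0 < q$i * p$i" unfolding J_def by auto
    then have "\<theta> * (q$i * p$i) \<le> (p$i / q$i) * (q$i * p$i)"
      using \<theta>_le[OF True] by (intro mult_right_mono) auto
    then show ?thesis using \<open>0 < q$i * p$i\<close> by (auto split: if_splits)
  next
    case False
    then have "\<theta> * (q$i * p$i) \<le> 0" using \<theta> unfolding J_def by (simp add: mult_nonneg_nonpos)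
    then show ?thesis using zero_le_square[of "p$i"] by linarith
  qed
  then have "\<forall>i. 0 \<le> (p - \<theta> *\<^sub>R q)$i * p$i" by (simp add: algebra_simps)
  moreover have "supp (p - \<theta> *\<^sub>R q) \<subseteq> supp p - {k}"
    using assms(1) kJ k(2) unfolding supp_def by (auto split: if_splits)
  moreover have "k \<in> supp p" using kJ unfolding supp_def by auto
  ultimately show ?thesis using that \<theta> by blast
qed

definition conforms_to :: "real^'m \<Rightarrow> real^'m \<Rightarrow> bool" where
  "conforms_to y r \<longleftrightarrow> (\<forall>i. y$i \<noteq> 0 \<longrightarrow> 0 < y$i * r$i)"

lemma conforms_to_supp: "conforms_to y r \<Longrightarrow> supp y \<subseteq> supp r"
  unfolding conforms_to_def supp_def by auto

text \<open>A dependency of minimal support among those conforming to r is a circuit vector.\<close>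
lemma conformal_circuit_exists:
  fixes u :: "'m::finite \<Rightarrow> real^'n"
  assumes r: "dependency u r" "r \<noteq> 0"
  obtains y where "dependency u y" "y \<noteq> 0" "circuit u (supp y)" "conforms_to y r"
proof -
  define P where "P y \<longleftrightarrow> dependency u y \<and> y \<noteq> 0 \<and> conforms_to y r" for y
  have "P r" unfolding P_def conforms_to_def using r by (simp add: zero_less_mult_iff linorder_neq_iff)
  from ex_has_least_nat[of P r "\<lambda>y. card (supp y)", OF this]
  obtain y where Py: "P y" and min: "\<And>y'. P y' \<Longrightarrow> card (supp y) \<le> card (supp y')" by blast
  have "\<not> supp z \<subset> supp y" if z: "dependency u z" "z \<noteq> 0" for z
  proof
    assume zy: "supp z \<subset> supp y"
    obtain i where i: "z$i \<noteq> 0" using z(2) by (auto simp: vec_eq_iff)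
    then have "y$i \<noteq> 0" using zy unfolding supp_def by auto
    define z' where "z' = (if 0 < z$i * y$i then z else -z)"
    have z': "dependency u z'" "supp z' = supp z" "0 < z'$i * y$i"
      using z(1) dependency_scaleR[of u z "-1"] i \<open>y$i \<noteq> 0\<close>
      unfolding z'_def supp_def by (auto simp: linorder_neq_iff zero_less_mult_iff)
    have "supp z' \<subseteq> supp y" "\<exists>j. 0 < z'$j * y$j" using zy z' by auto
    then obtain \<theta> where \<theta>: "\<forall>j. 0 \<le> (y - \<theta> *\<^sub>R z')$j * y$j" "supp (y - \<theta> *\<^sub>R z') \<subset> supp y"
      by (rule conformal_reduction)
    define y' where "y' = y - \<theta> *\<^sub>R z'"
    have "P y'"
      unfolding P_def
    proof (intro conjI)
      show "dependency u y'"
        using Py z'(1) unfolding P_def y'_def by (blast intro: dependency_diff dependency_scaleR)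
      show "conforms_to y' r"
        unfolding conforms_to_def
      proof (intro allI impI)
        fix j assume "y'$j \<noteq> 0"
        then have "0 < y'$j * y$j" "0 < y$j * r$j"
          using \<theta> Py unfolding y'_def P_def conforms_to_def supp_def by (auto simp: order_le_less)
        then show "0 < y'$j * r$j" by (auto simp: zero_less_mult_iff)
      qed
      show "y' \<noteq> 0"
      proof
        assume "y' = 0"
        then have "supp y \<subseteq> supp z'" unfolding y'_def supp_def by auto
        then show False using z'(2) zy by auto
      qed
    qed
    moreover have "card (supp y') < card (supp y)"
      using \<theta>(2) unfolding y'_def by (intro psubset_card_mono) auto
    ultimately show False using min by fastforce
  qed
  then have "circuit u (supp y)" using Py unfolding circuit_iff_dependency P_def by blast
  with Py that show ?thesis unfolding P_def by blast
qed

lemma attains_dependency_if_circuits: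
  fixes u :: "'m::finite \<Rightarrow> real^'n" and b :: "real^'m"
  assumes s: "\<forall>i\<in>UNIV. s i \<in> {-1,0,1}"
    and circuits: "\<forall>C. circuit u C \<longrightarrow> attains UNIV (circuit_vec u C) s (- inner (circuit_vec u C) b)"
    and "dependency u r"
  shows "attains UNIV r s (- inner r b)"
  using assms(3)
proof (induction "card (supp r)" arbitrary: r rule: less_induct)
  case less
  show ?case
  proof (cases "r = 0")
    case True
    then show ?thesis using sign_pattern_in_sign_orthant[OF s] unfolding attains_def by auto
  next
    case False
    obtain y where y: "dependency u y" "y \<noteq> 0" "circuit u (supp y)" "conforms_to y r"
      using conformal_circuit_exists[OF less.prems False] by blast
    obtain \<mu> where "y = \<mu> *\<^sub>R circuit_vec u (supp y)"
      using dependency_in_circuit_parallel[OF y(3) y(1)] by blast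
    then have attains_y: "attains UNIV y s (- inner y b)"
      using attains_scaleR[of UNIV _ s _ \<mu>] circuits y(3) by (metis inner_scaleR_left mult_minus_right)
    have "\<exists>i. 0 < y$i * r$i" using y(2,4) unfolding conforms_to_def by (auto simp: vec_eq_iff)
    then obtain \<theta> where \<theta>: "0 < \<theta>" "\<forall>i. 0 \<le> (r - \<theta> *\<^sub>R y)$i * r$i" "supp (r - \<theta> *\<^sub>R y) \<subset> supp r"
      using conformal_reduction[of y r] conforms_to_supp[OF y(4)] by blast
    define r' where "r' = r - \<theta> *\<^sub>R y"
    have "dependency u r'" unfolding r'_def using less.prems y(1) by (intro dependency_diff dependency_scaleR)
    moreover have "card (supp r') < card (supp r)" using \<theta>(3) unfolding r'_def by (intro psubset_card_mono) auto
    ultimately have attains_r': "attains UNIV r' s (- inner r' b)" using less.hyps by blast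
    have "0 \<le> r'$i * (\<theta> *\<^sub>R y)$i" for i
    proof (cases "y$i = 0")
      case False
      then have "0 < y$i * r$i" using y(4) unfolding conforms_to_def by blast
      then have "0 \<le> r'$i * y$i" using \<theta>(2) unfolding r'_def by (metis nonneg_mult_if_same_sign)
      then show ?thesis using \<theta>(1) by (simp add: mult.left_commute)
    qed simp
    then have "attains UNIV (r' + \<theta> *\<^sub>R y) s (- inner r' b + \<theta> * (- inner y b))"
      using attains_add_conformal[OF s _ attains_r' attains_scaleR[OF attains_y]] by blast
    moreover have "- inner r' b + \<theta> * (- inner y b) = - inner r b"
      unfolding r'_def by (simp add: inner_diff_left algebra_simps)
    ultimately show ?thesis unfolding r'_def by simp
  qed
qed

definition normal_map :: "('m::finite \<Rightarrow> real^'n) \<Rightarrow> real^'n \<Rightarrow> real^'m" where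
  "normal_map u x = (\<chi> i. inner (u i) x)"

lemma linear_normal_map: "linear (normal_map u)"
  unfolding normal_map_def by (intro linearI) (simp_all add: vec_eq_iff inner_add_right)

lemma inner_normal_map: "inner r (normal_map u x) = inner (\<Sum>i\<in>UNIV. r$i *\<^sub>R u i) x"
  unfolding normal_map_def inner_vec_def[of r] by (simp add: inner_sum_left)

lemma inner_normal_map_dependency: "dependency u r \<Longrightarrow> inner r (normal_map u x) = 0"
  unfolding inner_normal_map dependency_def by simp

lemma normal_map_diff_in_sign_orthant:
  "normal_map u x - a \<in> sign_orthant I s \<longleftrightarrow> (\<forall>i\<in>I. sign_vec u a x i = s i)"
  unfolding normal_map_def sign_orthant_def sign_vec_def by simp

text \<open>The separation step of the Farkas-type argument: a hyperplane through 0 separating it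
  from the convex set of all U x - a - t, t in the orthant, must vanish on the range of U.\<close>
lemma separating_dependency:
  fixes u :: "'m::finite \<Rightarrow> real^'n"
  assumes s: "\<forall>i\<in>I. s i \<in> {-1,0,1}"
    and no_x: "\<And>x. normal_map u x - a \<notin> sign_orthant I s"
  obtains r where "dependency u r" "\<And>t. t \<in> sign_orthant I s \<Longrightarrow> inner r t \<le> - inner r a"
    "\<exists>t\<in>sign_orthant I s. inner r t < - inner r a"
proof -
  define D where "D = (\<Union>y\<in>range (\<lambda>x. normal_map u x - a). \<Union>t\<in>sign_orthant I s. {y - t})"
  have "range (\<lambda>x. normal_map u x - a) = (\<lambda>y. y - a) ` range (normal_map u)" by auto
  then have "convex D"
    unfolding D_def using linear_normal_map
    by (metis convex_differences convex_sign_orthant convex_translation_subtract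
        convex_linear_image convex_UNIV)
  moreover have "0 \<notin> D" using no_x unfolding D_def by auto
  moreover have "D \<noteq> {}" using sign_pattern_in_sign_orthant[OF s] unfolding D_def by blast
  ultimately obtain r where r: "r \<in> span D" "r \<noteq> 0" "\<And>y. y \<in> D \<Longrightarrow> 0 \<le> inner r y"
    using separating_hyperplane_set_0_inspan by metis
  define w where "w = (\<Sum>i\<in>UNIV. r$i *\<^sub>R u i)"
  have key: "inner r t \<le> inner w x - inner r a" if "t \<in> sign_orthant I s" for x t
    using r(3)[of "normal_map u x - a - t"] that
    unfolding D_def w_def by (auto simp: inner_diff_right inner_normal_map)
  obtain t0 where t0: "t0 \<in> sign_orthant I s" using sign_pattern_in_sign_orthant[OF s] by blast
  \<comment> \<open>a nonzero w would let x run off to make the right-hand side of key arbitrarily small\<close>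
  have "w = 0"
  proof (rule ccontr)
    assume "w \<noteq> 0"
    define K where "K = \<bar>inner r a\<bar> + \<bar>inner r t0\<bar> + 1"
    have "inner w (- (K / inner w w) *\<^sub>R w) = - K" using \<open>w \<noteq> 0\<close> by simp
    then show False using key[OF t0, of "- (K / inner w w) *\<^sub>R w"] unfolding K_def by linarith
  qed
  then have "dependency u r" and le: "\<And>t. t \<in> sign_orthant I s \<Longrightarrow> inner r t \<le> - inner r a"
    using key[of _ 0] unfolding dependency_def w_def by auto
  moreover have "\<exists>t\<in>sign_orthant I s. inner r t < - inner r a"
  proof (rule ccontr)
    assume "\<not> ?thesis"
    then have "orthogonal r y" if "y \<in> D" for y
      using that le inner_normal_map_dependency[OF \<open>dependency u r\<close>]
      unfolding D_def orthogonal_def by (force simp: inner_diff_right)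
    then have "orthogonal r r" using orthogonal_to_span[OF r(1)] by blast
    then show False using r(2) unfolding orthogonal_def by simp
  qed
  ultimately show ?thesis using that by blast
qed

lemma sign_vector_exists_if_attains:
  fixes u :: "'m::finite \<Rightarrow> real^'n"
  assumes s: "\<forall>i\<in>I. s i \<in> {-1,0,1}"
    and attains: "\<And>r. dependency u r \<Longrightarrow> attains I r s (- inner r a)"
  obtains x where "\<forall>i\<in>I. sign_vec u a x i = s i"
proof (rule ccontr)
  assume "\<not> thesis"
  then have "normal_map u x - a \<notin> sign_orthant I s" for x
    using that normal_map_diff_in_sign_orthant by blast
  then obtain r where r: "dependency u r" "\<And>t. t \<in> sign_orthant I s \<Longrightarrow> inner r t \<le> - inner r a"
    and t1: "\<exists>t\<in>sign_orthant I s. inner r t < - inner r a"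
    using separating_dependency[OF s] by metis
  obtain t0 where t0: "t0 \<in> sign_orthant I s" "inner r t0 = - inner r a"
    using attains[OF r(1)] unfolding attains_def by blast
  \<comment> \<open>the bound is attained on a cone, so it is 0\<close>
  have "inner r (2 *\<^sub>R t0) \<le> - inner r a" "inner r ((1/2) *\<^sub>R t0) \<le> - inner r a"
    using r(2)[OF sign_orthant_scaleR[OF t0(1), of 2]] r(2)[OF sign_orthant_scaleR[OF t0(1), of "1/2"]]
    by simp_all
  then have a0: "inner r a = 0" using t0(2) by simp
  then have "attains I r s 0" "\<exists>v<0. attains I r s v"
    using t0 t1 unfolding attains_def by auto
  then have "attains I r s 1" unfolding attains_iff[OF s] by auto
  then show False using r(2) a0 unfolding attains_def by fastforce
qed

lemma sign_vec_attains:
  fixes u :: "'m::finite \<Rightarrow> real^'n"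
  assumes "dependency u r"
  shows "attains UNIV r (sign_vec u a x) (- inner r a)"
proof -
  have "normal_map u x - a \<in> sign_orthant UNIV (sign_vec u a x)"
    unfolding normal_map_diff_in_sign_orthant by simp
  moreover have "inner r (normal_map u x - a) = - inner r a"
    using inner_normal_map_dependency[OF assms] by (simp add: inner_diff_right)
  ultimately show ?thesis unfolding attains_def by blast
qed

lemma sign_arr_subset_if_circuit_signs:
  fixes u :: "'m::finite \<Rightarrow> real^'n"
  assumes same_signs: "\<And>C. circuit u C \<Longrightarrow>
      sgn (inner (circuit_vec u C) a) = sgn (inner (circuit_vec u C) b)"
  shows "sign_arr u a \<subseteq> sign_arr u b"
proof
  fix s assume "s \<in> sign_arr u a"
  then obtain x where x: "s = sign_vec u a x" unfolding sign_arr_def by auto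
  have s: "\<forall>i\<in>UNIV. s i \<in> {-1,0,1}" unfolding x sign_vec_def using sgn_in_signs by blast
  have "attains UNIV (circuit_vec u C) s (- inner (circuit_vec u C) b)" if "circuit u C" for C
  proof (rule attains_sgn_cong)
    show "attains UNIV (circuit_vec u C) s (- inner (circuit_vec u C) a)"
      unfolding x using sign_vec_attains circuit_vec_dependency(1)[OF that] by blast
  qed (use same_signs[OF that] in \<open>simp add: sgn_minus\<close>)
  then have "\<And>r. dependency u r \<Longrightarrow> attains UNIV r s (- inner r b)"
    using attains_dependency_if_circuits[OF s] by blast
  then obtain x' where "\<forall>i\<in>UNIV. sign_vec u b x' i = s i"
    using sign_vector_exists_if_attains[OF s] by blast
  then have "sign_vec u b x' = s" by auto
  then show "s \<in> sign_arr u b" unfolding sign_arr_def by auto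
qed

text \<open>On C, take the signs of t = -(c.a)/(c.c) c: it satisfies c.t = -c.a, the only constraint
  that dependencies supported in C impose.\<close>
lemma circuit_sign_vector_exists:
  fixes u :: "'m::finite \<Rightarrow> real^'n"
  assumes C: "circuit u C"
  defines "c \<equiv> circuit_vec u C"
  obtains x where "\<forall>i\<in>C. sign_vec u a x i = - sgn (inner c a) * sgn (c$i)"
proof -
  have c: "dependency u c" "supp c = C" "c \<noteq> 0"
    using circuit_vec_dependency[OF C] circuit_nonempty[OF C] supp_empty_iff unfolding c_def by metis+
  define ts where "ts = (- (inner c a / inner c c)) *\<^sub>R c"
  define s where "s i = sgn (ts$i)" for i
  have ts: "ts \<in> sign_orthant C s" unfolding sign_orthant_def s_def by simp
  have "attains C r s (- inner r a)" if r: "dependency u r" for r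
  proof (cases "supp r \<subseteq> C")
    case True
    then obtain \<mu> where "r = \<mu> *\<^sub>R c" using dependency_in_circuit_parallel[OF C r] c_def by metis
    then have "inner r ts = - inner r a" unfolding ts_def using c(3) by simp
    then show ?thesis unfolding attains_def using ts by blast
  next
    case False
    then obtain k where k: "r$k \<noteq> 0" "k \<notin> C" unfolding supp_def by auto
    \<comment> \<open>a free coordinate outside C adjusts the value\<close>
    define t where "t = ts + ((- inner r a - inner r ts) / r$k) *\<^sub>R axis k 1"
    have "t \<in> sign_orthant C s" using ts k(2) unfolding t_def sign_orthant_def by (auto simp: axis_def)
    moreover have "inner r t = - inner r a" unfolding t_def using k(1) by (simp add: inner_add_right inner_axis)
    ultimately show ?thesis unfolding attains_def by blast
  qed
  moreover have "\<forall>i\<in>C. s i \<in> {-1,0,1}" unfolding s_def using sgn_in_signs by blast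
  ultimately obtain x where "\<forall>i\<in>C. sign_vec u a x i = s i"
    using sign_vector_exists_if_attains by blast
  moreover have "s i = - sgn (inner c a) * sgn (c$i)" for i
    unfolding s_def ts_def using c(3) by (simp add: sgn_mult sgn_divide)
  ultimately show ?thesis using that by auto
qed

lemma circuit_signs_if_sign_arr_subset:
  fixes u :: "'m::finite \<Rightarrow> real^'n"
  assumes sub: "sign_arr u a \<subseteq> sign_arr u b" and C: "circuit u C"
  shows "sgn (inner (circuit_vec u C) a) = sgn (inner (circuit_vec u C) b)"
proof -
  define c where "c = circuit_vec u C"
  have c: "dependency u c" "supp c = C" using circuit_vec_dependency[OF C] c_def by auto
  obtain x where x: "\<forall>i\<in>C. sign_vec u a x i = - sgn (inner c a) * sgn (c$i)"
    using circuit_sign_vector_exists[OF C] unfolding c_def by blast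
  have "sign_vec u a x \<in> sign_arr u b" using sub unfolding sign_arr_def by auto
  then obtain x' where x': "sign_vec u b x' = sign_vec u a x" unfolding sign_arr_def by auto
  define d where "d = normal_map u x' - b"
  have "(\<Sum>i\<in>C. c$i * d$i) = inner c d"
    using c(2) unfolding inner_vec_def inner_real_def supp_def by (intro sum.mono_neutral_left) auto
  also have "\<dots> = - inner c b"
    unfolding d_def using inner_normal_map_dependency[OF c(1)] by (simp add: inner_diff_right)
  finally have "sgn (- inner c b) = sgn (\<Sum>i\<in>C. c$i * d$i)" by simp
  also have "\<dots> = sgn (- inner c a)"
  proof (rule sgn_sum_eq)
    fix i assume i: "i \<in> C"
    then have "c$i \<noteq> 0" using c(2) unfolding supp_def by auto
    moreover have "sgn (d$i) = - sgn (inner c a) * sgn (c$i)"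
      using fun_cong[OF x', of i] x i unfolding d_def normal_map_def sign_vec_def by simp
    ultimately show "sgn (c$i * d$i) = sgn (- inner c a)"
      by (simp add: sgn_mult sgn_minus)
  qed (use circuit_nonempty[OF C] in auto)
  finally show ?thesis unfolding c_def by (simp add: sgn_minus)
qed

definition circuit_signs :: "('m::finite \<Rightarrow> real^'n) \<Rightarrow> real^'m \<Rightarrow> 'm set \<Rightarrow> real" where
  "circuit_signs u y C = (if circuit u C then sgn (inner (circuit_vec u C) y) else 0)"

lemma sign_arr_subset_iff_circuit_signs:
  "sign_arr u a \<subseteq> sign_arr u b \<longleftrightarrow> circuit_signs u a = circuit_signs u b"
  using circuit_signs_if_sign_arr_subset[of u a b] sign_arr_subset_if_circuit_signs[of u a b]
  unfolding circuit_signs_def by (auto simp: fun_eq_iff)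

lemma Face_op_Sign_op:
  "Face_op u (Sign_op u S) = {b. \<forall>a\<in>S. circuit_signs u b = circuit_signs u a}"
proof -
  have "Face_op u (Sign_op u S) = {b. \<forall>a\<in>S. sign_arr u a \<subseteq> sign_arr u b}"
    unfolding Face_op_def Sign_op_def Face_vec_def by blast
  then show ?thesis unfolding sign_arr_subset_iff_circuit_signs by auto
qed

lemma derived_open_face_iff_fibre:
  "derived_open_face u F \<longleftrightarrow> F \<noteq> {} \<and> (\<exists>e. F = {y. circuit_signs u y = e})"
proof
  assume "derived_open_face u F"
  then obtain \<epsilon> where "F \<noteq> {}" "F = {y. \<forall>C. circuit u C \<longrightarrow> sgn (inner (circuit_vec u C) y) = \<epsilon> C}"
    unfolding derived_open_face_def by blast
  then show "F \<noteq> {} \<and> (\<exists>e. F = {y. circuit_signs u y = e})"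
    by (intro conjI exI[of _ "\<lambda>C. if circuit u C then \<epsilon> C else 0"])
      (auto simp: circuit_signs_def fun_eq_iff)
next
  assume "F \<noteq> {} \<and> (\<exists>e. F = {y. circuit_signs u y = e})"
  then obtain a where a: "a \<in> F" and "F = {y. circuit_signs u y = circuit_signs u a}" by auto
  then have "F = {y. \<forall>C. circuit u C \<longrightarrow> sgn (inner (circuit_vec u C) y) = circuit_signs u a C}"
    by (auto simp: circuit_signs_def fun_eq_iff)
  moreover have "\<forall>C. circuit_signs u a C \<in> {-1, 0, 1}"
    unfolding circuit_signs_def using sgn_in_signs by simp
  ultimately show "derived_open_face u F" unfolding derived_open_face_def using a by blast
qed

lemma agreeing_points_eq_iff_fibre:
  assumes "S \<noteq> {}"
  shows "{b. \<forall>a\<in>S. g b = g a} = S \<longleftrightarrow> (\<exists>e. S = {y. g y = e})"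
proof
  assume eq: "{b. \<forall>a\<in>S. g b = g a} = S"
  obtain a0 where a0: "a0 \<in> S" using assms by auto
  have same: "g a = g a0" if "a \<in> S" for a
    using that a0 eq by blast
  have "y \<in> S" if "g y = g a0" for y
  proof -
    have "y \<in> {b. \<forall>a\<in>S. g b = g a}" using that same by simp
    then show ?thesis using eq by simp
  qed
  then have "S = {y. g y = g a0}" using same by blast
  then show "\<exists>e. S = {y. g y = e}" ..
next
  assume "\<exists>e. S = {y. g y = e}"
  then obtain e where e: "S = {y. g y = e}" by blast
  with assms obtain a0 where "g a0 = e" by auto
  then show "{b. \<forall>a\<in>S. g b = g a} = S" unfolding e by auto
qed

theorem mainTheorem20:
  fixes u :: "'m::finite \<Rightarrow> real^'n" and S :: "(real^'m) set"
  assumes "\<forall>i. u i \<noteq> 0"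
    and "S \<noteq> {}"
  shows "Face_op u (Sign_op u S) = S \<longleftrightarrow> derived_open_face u S"
  unfolding Face_op_Sign_op derived_open_face_iff_fibre agreeing_points_eq_iff_fibre[OF assms(2)]
  using assms(2) by simp

end
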